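(* In the setting described in the context, there exists $\overline\alpha>0$ such that for every $\alpha\in[0,\overline\alpha]$, the function $z_{1,\alpha}$ is nonnegative on $(0,R)$.
   Context: Let $n=2$, $\Omega=\mathbb B(0,R)$, $0<m_0<\kappa$, $r_0^*\in(0,R)$ with $\kappa|\mathbb B(0,r_0^* )|=m_0|\Omega|$, $m_0^*=\kappa\mathds 1_{\mathbb B(0,r_0^* )}$ and $\sigma_\alpha=1+\alpha m_0^*$. Let $\lambda_{0,\alpha}$ be the principal Dirichlet eigenvalue of $u\mapsto-\nabla\cdot(\sigma_\alpha\nabla u)-m_0^*u$ on $\Omega$ and $u_{0,\alpha}$ the nonnegative $L^2$-normalized eigenfunction, which is radial; we write $u_{0,\alpha}(r)$ for its profile. For $f$ defined near $r_0^*$, $f|_{int}(r_0^* )$, $f|_{ext}(r_0^* )$ denote the one-sided limits from $r<r_0^*$ and $r>r_0^*$, and $[\![f]\!]=f|_{ext}-f|_{int}$. For $k\ge1$, $z_{k,\alpha}:[0,R]\to\mathbb{R}$ is the solution of $-\sigma_\alpha z''-\frac{\sigma_\alpha}{r}z'=(\lambda_{0,\alpha}-\frac{k^2}{r^2})z+m_0^*z$ on $(0,r_0^* )\cup(r_0^*,R)$, with $[\![\sigma_\alpha z']\!](r_0^* )=-\kappa u_{0,\alpha}(r_0^* )$, $[\![z]\!](r_0^* )=-[\![\partial_ru_{0,\alpha}]\!](r_0^* )$, $z(0)=0$, $z(R)=0$. *)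

theory Defs
  imports "HOL-Analysis.Analysis"
begin

text \<open>Radial setting in dimension 2: Omega = B(0,R), m0* = kappa * indicator of B(0,r0),
  sigma_alpha = 1 + alpha * m0*.  All functions below are radial profiles on [0,R].\<close>

definition mstar :: "real \<Rightarrow> real \<Rightarrow> real \<Rightarrow> real" where
  "mstar \<kappa> r0 r = (if r < r0 then \<kappa> else 0)"

definition sigma :: "real \<Rightarrow> real \<Rightarrow> real \<Rightarrow> real \<Rightarrow> real" where
  "sigma \<kappa> r0 \<alpha> r = 1 + \<alpha> * mstar \<kappa> r0 r"

definition solves_radial_ode ::
  "real \<Rightarrow> real \<Rightarrow> real \<Rightarrow> real \<Rightarrow> real \<Rightarrow> nat \<Rightarrow> (real \<Rightarrow> real) \<Rightarrow> (real \<Rightarrow> real) \<Rightarrow> bool" where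
  "solves_radial_ode \<kappa> r0 \<alpha> R lam k f f' \<longleftrightarrow>
     (\<forall>r \<in> {0<..<r0} \<union> {r0<..<R}.
        (f has_real_derivative f' r) (at r) \<and>
        (\<exists>f''. (f' has_real_derivative f'') (at r) \<and>
           - sigma \<kappa> r0 \<alpha> r * f'' - sigma \<kappa> r0 \<alpha> r / r * f' r
             = (lam - real k ^ 2 / r ^ 2) * f r + mstar \<kappa> r0 r * f r))"

text \<open>Radial Dirichlet eigenfunction of u \<mapsto> -div(sigma grad u) - m0* u on B(0,R):
  profile continuous on [0,R] (regular at the origin), classical solution on each phase,
  transmission conditions (continuity of u and of sigma u') at r0, u(R) = 0, nontrivial.\<close>
definition radial_eigenfunction ::
  "real \<Rightarrow> real \<Rightarrow> real \<Rightarrow> real \<Rightarrow> real \<Rightarrow> (real \<Rightarrow> real) \<Rightarrow> bool" where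
  "radial_eigenfunction \<kappa> r0 \<alpha> R lam u \<longleftrightarrow>
     continuous_on {0..R} u \<and>
     (\<exists>u' a b. solves_radial_ode \<kappa> r0 \<alpha> R lam 0 u u' \<and>
        (u' \<longlongrightarrow> a) (at_left r0) \<and> (u' \<longlongrightarrow> b) (at_right r0) \<and>
        b - (1 + \<alpha> * \<kappa>) * a = 0) \<and>
     u R = 0 \<and> (\<exists>r \<in> {0..R}. u r \<noteq> 0)"

definition principal_eigenpair ::
  "real \<Rightarrow> real \<Rightarrow> real \<Rightarrow> real \<Rightarrow> real \<Rightarrow> (real \<Rightarrow> real) \<Rightarrow> bool" where
  "principal_eigenpair \<kappa> r0 \<alpha> R lam u \<longleftrightarrow>
     radial_eigenfunction \<kappa> r0 \<alpha> R lam u \<and>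
     (\<forall>\<mu> v. radial_eigenfunction \<kappa> r0 \<alpha> R \<mu> v \<longrightarrow> lam \<le> \<mu>) \<and>
     (\<forall>r \<in> {0..R}. 0 \<le> u r) \<and>
     integral (ball (0::real^2) R) (\<lambda>x. (u (norm x))\<^sup>2) = 1"

text \<open>z = z_{k,alpha}: solves the radial ODE on (0,r0) and (r0,R), is continuous up to the
  boundary of each phase, with jump conditions
  [[sigma z']](r0) = - kappa u(r0),  [[z]](r0) = - [[u']](r0),  z(0) = 0, z(R) = 0,
  where [[f]] = f|ext - f|int (one-sided limits).\<close>
definition z_problem ::
  "real \<Rightarrow> real \<Rightarrow> real \<Rightarrow> real \<Rightarrow> real \<Rightarrow> (real \<Rightarrow> real) \<Rightarrow> nat \<Rightarrow> (real \<Rightarrow> real) \<Rightarrow> bool" where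
  "z_problem \<kappa> r0 \<alpha> R lam u k z \<longleftrightarrow>
     continuous_on {0..<r0} z \<and> continuous_on {r0<..R} z \<and>
     (\<exists>z' u' zi ze dzi dze dui due.
        solves_radial_ode \<kappa> r0 \<alpha> R lam k z z' \<and>
        (\<forall>r \<in> {0<..<r0} \<union> {r0<..<R}. (u has_real_derivative u' r) (at r)) \<and>
        (z \<longlongrightarrow> zi) (at_left r0) \<and> (z \<longlongrightarrow> ze) (at_right r0) \<and>
        (z' \<longlongrightarrow> dzi) (at_left r0) \<and> (z' \<longlongrightarrow> dze) (at_right r0) \<and>
        (u' \<longlongrightarrow> dui) (at_left r0) \<and> (u' \<longlongrightarrow> due) (at_right r0) \<and>
        1 * dze - (1 + \<alpha> * \<kappa>) * dzi = - \<kappa> * u r0 \<and>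
        ze - zi = - (due - dui)) \<and>
     z 0 = 0 \<and> z R = 0"

end

theory Submission
  imports Defs
begin

(*
  On a phase where sigma = s and lam + m0* = q, the radial equations read
  (s r f')' = (k^2/r - q r) f, with k = 0 for u = u_{0,alpha} and k = 1 for z = z_{1,alpha}.
  Hence the Wronskian W = u (s r z') - z (s r u') satisfies W' = u z / r, and
  (z/u)' = W / (s r u^2).

  From u >= 0 alone one gets lam + kappa > 0, u' <= 0, u > 0 on [0,R) and
  -u'(r0+) <= V u(r0) for an explicit V.  The Wronskian identities give a maximum principle:
  z/u has no negative interior minimum on either phase, so z >= 0 on a phase as soon as its
  boundary values are >= 0.  These are z(0) = z(R) = 0 and the one-sided limits z(r0-),
  z(r0+), whose difference [[z]] = -alpha kappa u'(r0-) lies in [0, alpha kappa V u(r0)].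

  It remains to exclude z(r0-) < 0.  Then z <= 0 inside, which forces W(r0-) <= 0, while
  W(r0+) >= -(R - r0) u(r0) max(z(r0+), 0) / r0 because W(R-) = 0 and
  W' = u z / r <= u(r0) max(z(r0+), 0) / r0 outside.  The flux jump
  [[sigma z']] = -kappa u(r0) yields
      kappa u(r0)^2 r0 = W(r0-) - W(r0+) + r0 [[z]] (-u'(r0+)),
  and with max(z(r0+), 0) <= [[z]] the right-hand side is O(alpha) kappa u(r0)^2; for
  alpha <= alpha_bound it is at most half of the left-hand side.
*)

section \<open>Real functions on intervals\<close>

lemma DERIV_nonneg_on_open_imp_nondecreasing:
  fixes f f' :: "real \<Rightarrow> real"
  assumes "\<And>x. lo < x \<Longrightarrow> x < hi \<Longrightarrow> (f has_real_derivative f' x) (at x)"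
    and "\<And>x. lo < x \<Longrightarrow> x < hi \<Longrightarrow> 0 \<le> f' x"
    and "lo < s" "s \<le> t" "t < hi"
  shows "f s \<le> f t"
proof (rule DERIV_nonneg_imp_nondecreasing[of s t f])
  fix x assume "s \<le> x" "x \<le> t"
  then show "\<exists>y. (f has_real_derivative y) (at x) \<and> 0 \<le> y"
    using assms by (meson le_less_trans less_le_trans)
qed (fact assms(4))

lemma DERIV_nonpos_on_open_imp_nonincreasing:
  fixes f f' :: "real \<Rightarrow> real"
  assumes "\<And>x. lo < x \<Longrightarrow> x < hi \<Longrightarrow> (f has_real_derivative f' x) (at x)"
    and "\<And>x. lo < x \<Longrightarrow> x < hi \<Longrightarrow> f' x \<le> 0"
    and "lo < s" "s \<le> t" "t < hi"
  shows "f t \<le> f s"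
  using DERIV_nonneg_on_open_imp_nondecreasing[of lo hi "\<lambda>x. - f x" "\<lambda>x. - f' x" s t] assms
  by (auto intro: DERIV_minus)

lemma piecewise_DERIV_nonneg_imp_mono_on:
  fixes f f' :: "real \<Rightarrow> real"
  assumes cont: "continuous_on {lo..hi} f" and m: "lo \<le> m" "m \<le> hi"
    and deriv: "\<And>x. x \<in> {lo<..<hi} - {m} \<Longrightarrow> (f has_real_derivative f' x) (at x)"
    and nonneg: "\<And>x. x \<in> {lo<..<hi} - {m} \<Longrightarrow> 0 \<le> f' x"
  shows "mono_on {lo..hi} f"
proof -
  have piece: "f x \<le> f y"
    if "l \<le> x" "x \<le> y" "y \<le> h" "lo \<le> l" "h \<le> hi" "m \<notin> {l<..<h}" for l h x y
  proof (rule DERIV_nonneg_imp_increasing_open[OF \<open>x \<le> y\<close>])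
    fix t assume "x < t" "t < y"
    then have "t \<in> {lo<..<hi} - {m}" using that by auto
    then show "\<exists>d. (f has_real_derivative d) (at t) \<and> 0 \<le> d" using deriv nonneg by blast
  next
    show "continuous_on {x..y} f" using that by (auto intro: continuous_on_subset[OF cont])
  qed
  show ?thesis
  proof (rule mono_onI)
    fix x y assume xy: "x \<in> {lo..hi}" "y \<in> {lo..hi}" "x \<le> y"
    consider "y \<le> m" | "m \<le> x" | "x < m" "m < y" by linarith
    then show "f x \<le> f y"
    proof cases
      case 1 then show ?thesis using piece[of lo x y m] xy m by auto
    next
      case 2 then show ?thesis using piece[of m x y hi] xy m by auto
    next
      case 3 then show ?thesis using piece[of lo x m m] piece[of m m y hi] xy m by fastforce
    qed
  qed
qed

lemma piecewise_DERIV_nonpos_imp_antimono_on: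
  fixes f f' :: "real \<Rightarrow> real"
  assumes "continuous_on {lo..hi} f" "lo \<le> m" "m \<le> hi"
    and "\<And>x. x \<in> {lo<..<hi} - {m} \<Longrightarrow> (f has_real_derivative f' x) (at x)"
    and "\<And>x. x \<in> {lo<..<hi} - {m} \<Longrightarrow> f' x \<le> 0"
  shows "antimono_on {lo..hi} f"
proof -
  have "mono_on {lo..hi} (\<lambda>x. - f x)"
    using assms by (intro piecewise_DERIV_nonneg_imp_mono_on[where f' = "\<lambda>x. - f' x" and m = m])
      (auto intro: continuous_on_minus DERIV_minus)
  then show ?thesis by (auto intro!: monotone_onI dest: monotone_onD)
qed

lemma tendsto_at_right_lowerbound:
  fixes f :: "real \<Rightarrow> real"
  assumes "lo < t" "(f \<longlongrightarrow> L) (at_right lo)" "\<And>s. lo < s \<Longrightarrow> s < t \<Longrightarrow> c \<le> f s"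
  shows "c \<le> L"
  by (rule tendsto_lowerbound[OF assms(2)]) (use assms(1,3) in \<open>auto simp: eventually_at_right_field\<close>)

lemma tendsto_at_right_upperbound:
  fixes f :: "real \<Rightarrow> real"
  assumes "lo < t" "(f \<longlongrightarrow> L) (at_right lo)" "\<And>s. lo < s \<Longrightarrow> s < t \<Longrightarrow> f s \<le> c"
  shows "L \<le> c"
  by (rule tendsto_upperbound[OF assms(2)]) (use assms(1,3) in \<open>auto simp: eventually_at_right_field\<close>)

lemma tendsto_at_left_lowerbound:
  fixes f :: "real \<Rightarrow> real"
  assumes "t < hi" "(f \<longlongrightarrow> L) (at_left hi)" "\<And>s. t < s \<Longrightarrow> s < hi \<Longrightarrow> c \<le> f s"
  shows "c \<le> L"
  by (rule tendsto_lowerbound[OF assms(2)]) (use assms(1,3) in \<open>auto simp: eventually_at_left_field\<close>)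

lemma tendsto_at_left_upperbound:
  fixes f :: "real \<Rightarrow> real"
  assumes "t < hi" "(f \<longlongrightarrow> L) (at_left hi)" "\<And>s. t < s \<Longrightarrow> s < hi \<Longrightarrow> f s \<le> c"
  shows "L \<le> c"
  by (rule tendsto_upperbound[OF assms(2)]) (use assms(1,3) in \<open>auto simp: eventually_at_left_field\<close>)

lemma tendsto_at_left_exceeds:
  fixes f :: "real \<Rightarrow> real"
  assumes "(f \<longlongrightarrow> L) (at_left hi)" "c < L" "t < hi"
  obtains h where "t < h" "h < hi" "c < f h"
proof -
  obtain b where b: "b < hi" "\<And>y. b < y \<Longrightarrow> y < hi \<Longrightarrow> c < f y"
    using order_tendstoD(1)[OF assms(1,2)] by (auto simp: eventually_at_left_field)
  show ?thesis using b assms(3) by (intro that[of "(max b t + hi) / 2"]) auto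
qed

lemma tendsto_at_right_exceeds:
  fixes f :: "real \<Rightarrow> real"
  assumes "(f \<longlongrightarrow> L) (at_right lo)" "c < L" "lo < t"
  obtains h where "lo < h" "h < t" "c < f h"
proof -
  obtain b where b: "lo < b" "\<And>y. lo < y \<Longrightarrow> y < b \<Longrightarrow> c < f y"
    using order_tendstoD(1)[OF assms(1,2)] by (auto simp: eventually_at_right_field)
  show ?thesis using b assms(3) by (intro that[of "(lo + min b t) / 2"]) auto
qed

lemma DERIV_nonpos_imp_ge_limit_at_left:
  fixes f f' :: "real \<Rightarrow> real"
  assumes "\<And>x. lo < x \<Longrightarrow> x < hi \<Longrightarrow> (f has_real_derivative f' x) (at x)"
    and "\<And>x. lo < x \<Longrightarrow> x < hi \<Longrightarrow> f' x \<le> 0"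
    and "(f \<longlongrightarrow> L) (at_left hi)" "lo < x" "x < hi"
  shows "L \<le> f x"
  by (rule tendsto_at_left_upperbound[OF assms(5,3)])
     (use DERIV_nonpos_on_open_imp_nonincreasing[OF assms(1,2)] assms(4) in auto)

lemma DERIV_nonpos_imp_le_limit_at_right:
  fixes f f' :: "real \<Rightarrow> real"
  assumes "\<And>x. lo < x \<Longrightarrow> x < hi \<Longrightarrow> (f has_real_derivative f' x) (at x)"
    and "\<And>x. lo < x \<Longrightarrow> x < hi \<Longrightarrow> f' x \<le> 0"
    and "(f \<longlongrightarrow> L) (at_right lo)" "lo < x" "x < hi"
  shows "f x \<le> L"
  by (rule tendsto_at_right_lowerbound[OF assms(4,3)])
     (use DERIV_nonpos_on_open_imp_nonincreasing[OF assms(1,2)] assms(5) in auto)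

lemma DERIV_nonneg_imp_le_limit_at_left:
  fixes f f' :: "real \<Rightarrow> real"
  assumes "\<And>x. lo < x \<Longrightarrow> x < hi \<Longrightarrow> (f has_real_derivative f' x) (at x)"
    and "\<And>x. lo < x \<Longrightarrow> x < hi \<Longrightarrow> 0 \<le> f' x"
    and "(f \<longlongrightarrow> L) (at_left hi)" "lo < x" "x < hi"
  shows "f x \<le> L"
  by (rule tendsto_at_left_lowerbound[OF assms(5,3)])
     (use DERIV_nonneg_on_open_imp_nondecreasing[OF assms(1,2)] assms(4) in auto)

lemma DERIV_nonneg_imp_ge_limit_at_right:
  fixes f f' :: "real \<Rightarrow> real"
  assumes "\<And>x. lo < x \<Longrightarrow> x < hi \<Longrightarrow> (f has_real_derivative f' x) (at x)"
    and "\<And>x. lo < x \<Longrightarrow> x < hi \<Longrightarrow> 0 \<le> f' x"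
    and "(f \<longlongrightarrow> L) (at_right lo)" "lo < x" "x < hi"
  shows "L \<le> f x"
  by (rule tendsto_at_right_upperbound[OF assms(4,3)])
     (use DERIV_nonneg_on_open_imp_nondecreasing[OF assms(1,2)] assms(5) in auto)

lemma DERIV_neg_imp_gt_limit_at_left:
  fixes f f' :: "real \<Rightarrow> real"
  assumes deriv: "\<And>x. lo < x \<Longrightarrow> x < hi \<Longrightarrow> (f has_real_derivative f' x) (at x)"
    and neg: "\<And>x. lo < x \<Longrightarrow> x < hi \<Longrightarrow> f' x < 0"
    and lim: "(f \<longlongrightarrow> L) (at_left hi)" and x: "lo < x" "x < hi"
  shows "L < f x"
proof -
  define x' where "x' = (x + hi) / 2"
  have x': "x < x'" "x' < hi" using x by (auto simp: x'_def)
  have "L \<le> f x'"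
    by (rule DERIV_nonpos_imp_ge_limit_at_left[OF deriv _ lim])
       (use x x' in \<open>auto intro!: less_imp_le[OF neg]\<close>)
  moreover have "f x' < f x"
  proof (rule DERIV_neg_imp_decreasing_open[OF x'(1)])
    show "\<exists>l. (f has_real_derivative l) (at y) \<and> l < 0" if "x < y" "y < x'" for y
      using deriv neg that x x' by force
    show "continuous_on {x..x'} f"
    proof (intro continuous_at_imp_continuous_on ballI)
      fix y assume "y \<in> {x..x'}"
      then show "isCont f y" using DERIV_isCont[OF deriv] x x' by simp
    qed
  qed
  ultimately show ?thesis by simp
qed

lemma DERIV_bound_imp_abs_diff_le:
  fixes f f' :: "real \<Rightarrow> real"
  assumes "a \<le> b" "\<And>x. a \<le> x \<Longrightarrow> x \<le> b \<Longrightarrow> (f has_real_derivative f' x) (at x)"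
    and "\<And>x. a \<le> x \<Longrightarrow> x \<le> b \<Longrightarrow> \<bar>f' x\<bar> \<le> M"
  shows "\<bar>f b - f a\<bar> \<le> M * (b - a)"
  using field_differentiable_bound[of "{a..b}" f f' M b a] assms
  by (auto intro: has_field_derivative_at_within)

lemma DERIV_ge_div_imp_not_continuous:
  fixes f f' :: "real \<Rightarrow> real"
  assumes "0 < t" "0 < c"
    and deriv: "\<And>x. 0 < x \<Longrightarrow> x < t \<Longrightarrow> (f has_real_derivative f' x) (at x)"
    and ge: "\<And>x. 0 < x \<Longrightarrow> x < t \<Longrightarrow> c / x \<le> f' x"
  shows "\<not> continuous_on {0..t} f"
proof
  assume "continuous_on {0..t} f"
  then obtain m where m: "\<And>y. y \<in> {0..t} \<Longrightarrow> f m \<le> f y"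
    using continuous_attains_inf[of "{0..t}" f] \<open>0 < t\<close> by fastforce
  define e where "e = min (t / 2) (exp ((f m - f t) / c + ln t - 1))"
  have e: "0 < e" "e < t" using \<open>0 < t\<close> by (auto simp: e_def)
  have "f e - c * ln e \<le> f t - c * ln t"
  proof (rule DERIV_nonneg_imp_increasing_open[of e t "\<lambda>x. f x - c * ln x"])
    fix x assume x: "e < x" "x < t"
    then have "((\<lambda>x. f x - c * ln x) has_real_derivative f' x - c * (1 / x)) (at x)"
      using e by (intro DERIV_diff DERIV_cmult deriv DERIV_ln_divide) auto
    moreover have "0 \<le> f' x - c * (1 / x)" using ge[of x] x e by simp
    ultimately show "\<exists>y. ((\<lambda>x. f x - c * ln x) has_real_derivative y) (at x) \<and> 0 \<le> y" by blast
  next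
    show "continuous_on {e..t} (\<lambda>x. f x - c * ln x)"
      using e by (intro continuous_intros continuous_on_subset[OF \<open>continuous_on {0..t} f\<close>]) auto
  qed (use e in simp)
  moreover have "f m \<le> f e" using m[of e] e by simp
  ultimately have "(f m - f t) / c + ln t \<le> ln e" using \<open>0 < c\<close> by (simp add: field_simps)
  moreover have "ln e \<le> (f m - f t) / c + ln t - 1"
    using e unfolding e_def by (metis ln_exp ln_le_cancel_iff exp_gt_zero min.cobounded2)
  ultimately show False by linarith
qed

lemma flux_nonincreasing_imp_deriv_nonpos:
  fixes f f' :: "real \<Rightarrow> real"
  assumes "0 < t" "continuous_on {0..t} f"
    and deriv: "\<And>x. 0 < x \<Longrightarrow> x < t \<Longrightarrow> (f has_real_derivative f' x) (at x)"
    and flux: "\<And>x. 0 < x \<Longrightarrow> x < t \<Longrightarrow> t * f' t \<le> x * f' x"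
  shows "f' t \<le> 0"
proof (rule ccontr)
  assume "\<not> f' t \<le> 0"
  then have "0 < t * f' t" using \<open>0 < t\<close> by simp
  moreover have "t * f' t / x \<le> f' x" if "0 < x" "x < t" for x
    using flux[OF that] that by (simp add: divide_le_eq mult.commute)
  ultimately show False
    using DERIV_ge_div_imp_not_continuous[OF \<open>0 < t\<close> _ deriv] assms(2) by blast
qed

lemma no_negative_interior_min:
  fixes f :: "real \<Rightarrow> real"
  assumes "a < s" "s < b" "continuous_on {a..b} f" "f s < f a" "f s < f b" "f s < 0"
    and diff: "\<And>x. a < x \<Longrightarrow> x < b \<Longrightarrow> f differentiable (at x)"
    and descent: "\<And>x. a < x \<Longrightarrow> x < b \<Longrightarrow> f x < 0 \<Longrightarrow> (f has_real_derivative 0) (at x) \<Longrightarrow>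
               \<forall>\<^sub>F y in at_right x. f y < f x"
  shows False
proof -
  obtain m where m: "m \<in> {a..b}" "\<And>y. y \<in> {a..b} \<Longrightarrow> f m \<le> f y"
    using continuous_attains_inf[of "{a..b}" f] assms(1-3) by fastforce
  have "f m \<le> f s" using m(2) assms(1,2) by simp
  then have mab: "a < m" "m < b" using m(1) assms(4,5) by (auto simp: le_less)
  have min: "f m \<le> f y" if "\<bar>m - y\<bar> < min (m - a) (b - m)" for y
    using m(2) that by (auto simp: abs_less_iff)
  obtain d where d: "(f has_real_derivative d) (at m)"
    using diff[OF mab] by (auto simp: real_differentiable_def)
  have "d = 0" using DERIV_local_min[OF d, of "min (m - a) (b - m)"] mab min by auto
  then have "\<forall>\<^sub>F y in at_right m. f y < f m"
    using descent[OF mab] d \<open>f m \<le> f s\<close> \<open>f s < 0\<close> by simp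
  then obtain e where e: "m < e" "\<And>y. m < y \<Longrightarrow> y < e \<Longrightarrow> f y < f m"
    by (auto simp: eventually_at_right_field)
  define y where "y = (m + min e b) / 2"
  have "m < y" "y < e" "y < b" using e(1) mab by (auto simp: y_def)
  then show False using m(2)[of y] e(2)[of y] mab by simp
qed

section \<open>Radial equations in divergence form\<close>

text \<open>The equation of \<^const>\<open>solves_radial_ode\<close> multiplied by \<open>r\<close>, on a phase where
  \<open>sigma = s\<close> and \<open>lam + m0* = q\<close>.\<close>
definition radial_ode_on ::
  "real \<Rightarrow> real \<Rightarrow> real \<Rightarrow> real \<Rightarrow> nat \<Rightarrow> (real \<Rightarrow> real) \<Rightarrow> (real \<Rightarrow> real) \<Rightarrow> bool" where
  "radial_ode_on lo hi s q k f f' \<longleftrightarrow> (\<forall>t\<in>{lo<..<hi}. (f has_real_derivative f' t) (at t) \<and>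
      ((\<lambda>r. s * r * f' r) has_real_derivative (real k ^ 2 / t - q * t) * f t) (at t))"

lemma radial_ode_on_deriv:
  "radial_ode_on lo hi s q k f f' \<Longrightarrow> lo < t \<Longrightarrow> t < hi \<Longrightarrow> (f has_real_derivative f' t) (at t)"
  unfolding radial_ode_on_def by auto

lemma radial_ode_on_flux_deriv:
  "radial_ode_on lo hi s q k f f' \<Longrightarrow> lo < t \<Longrightarrow> t < hi \<Longrightarrow>
    ((\<lambda>r. s * r * f' r) has_real_derivative (real k ^ 2 / t - q * t) * f t) (at t)"
  unfolding radial_ode_on_def by auto

lemma radial_ode_on_uminus:
  "radial_ode_on lo hi s q k f f' \<Longrightarrow> radial_ode_on lo hi s q k (\<lambda>r. - f r) (\<lambda>r. - f' r)"
  unfolding radial_ode_on_def by (auto dest: DERIV_minus)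

lemma solves_radial_ode_flux_deriv:
  assumes "solves_radial_ode \<kappa> r0 \<alpha> R lam k f f'" "t \<in> {0<..<r0} \<union> {r0<..<R}" "0 < r0"
  shows "((\<lambda>r. sigma \<kappa> r0 \<alpha> t * r * f' r) has_real_derivative
           (real k ^ 2 / t - (lam + mstar \<kappa> r0 t) * t) * f t) (at t)"
proof -
  obtain f'' where d2: "(f' has_real_derivative f'') (at t)"
     and eq: "- sigma \<kappa> r0 \<alpha> t * f'' - sigma \<kappa> r0 \<alpha> t / t * f' t
             = (lam - real k ^ 2 / t ^ 2) * f t + mstar \<kappa> r0 t * f t"
    using assms(1,2) unfolding solves_radial_ode_def by blast
  have "0 < t" using assms(2,3) by auto
  define S where "S = sigma \<kappa> r0 \<alpha> t"
  have "((\<lambda>r. S * r * f' r) has_real_derivative S * f' t + S * t * f'') (at t)"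
    using DERIV_mult[OF DERIV_cmult[OF DERIV_ident, of S] d2] by (simp add: algebra_simps)
  moreover have "S * f' t + S * t * f'' = (real k ^ 2 / t - (lam + mstar \<kappa> r0 t) * t) * f t"
  proof -
    have "t * (- S * f'' - S / t * f' t) = t * ((lam - real k ^ 2 / t ^ 2) * f t + mstar \<kappa> r0 t * f t)"
      using eq unfolding S_def by simp
    moreover have "t * (- S * f'' - S / t * f' t) = - (S * t * f'') - S * f' t"
      using \<open>0 < t\<close> by (simp add: field_simps)
    moreover have "t * ((lam - real k ^ 2 / t ^ 2) * f t + mstar \<kappa> r0 t * f t)
        = (lam + mstar \<kappa> r0 t) * t * f t - real k ^ 2 * f t / t"
      using \<open>0 < t\<close> by (simp add: field_simps power2_eq_square)
    ultimately have "S * t * f'' = - S * f' t - (lam + mstar \<kappa> r0 t) * t * f t + real k ^ 2 * f t / t"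
      by linarith
    then show ?thesis by (simp add: algebra_simps diff_divide_distrib)
  qed
  ultimately show ?thesis unfolding S_def by simp
qed

lemma solves_radial_ode_inner:
  assumes "solves_radial_ode \<kappa> r0 \<alpha> R lam k f f'" "0 < r0"
  shows "radial_ode_on 0 r0 (1 + \<alpha> * \<kappa>) (lam + \<kappa>) k f f'"
  unfolding radial_ode_on_def
proof
  fix t assume "t \<in> {0<..<r0}"
  then have t: "t \<in> {0<..<r0} \<union> {r0<..<R}" "t < r0" by auto
  then show "(f has_real_derivative f' t) (at t) \<and>
      ((\<lambda>r. (1 + \<alpha> * \<kappa>) * r * f' r) has_real_derivative (real k ^ 2 / t - (lam + \<kappa>) * t) * f t) (at t)"
    using solves_radial_ode_flux_deriv[OF assms(1) t(1) assms(2)] assms(1)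
    by (auto simp: sigma_def mstar_def solves_radial_ode_def)
qed

lemma solves_radial_ode_outer:
  assumes "solves_radial_ode \<kappa> r0 \<alpha> R lam k f f'" "0 < r0"
  shows "radial_ode_on r0 R 1 lam k f f'"
  unfolding radial_ode_on_def
proof
  fix t assume "t \<in> {r0<..<R}"
  then have t: "t \<in> {0<..<r0} \<union> {r0<..<R}" "\<not> t < r0" by auto
  then show "(f has_real_derivative f' t) (at t) \<and>
      ((\<lambda>r. 1 * r * f' r) has_real_derivative (real k ^ 2 / t - lam * t) * f t) (at t)"
    using solves_radial_ode_flux_deriv[OF assms(1) t(1) assms(2)] assms(1)
    by (auto simp: sigma_def mstar_def solves_radial_ode_def)
qed

definition wronskian ::
  "real \<Rightarrow> (real \<Rightarrow> real) \<Rightarrow> (real \<Rightarrow> real) \<Rightarrow> (real \<Rightarrow> real) \<Rightarrow> (real \<Rightarrow> real) \<Rightarrow> real \<Rightarrow> real" where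
  "wronskian s u u' z z' r = u r * (s * r * z' r) - z r * (s * r * u' r)"

lemma wronskian_deriv:
  assumes "radial_ode_on lo hi s q k u u'" "radial_ode_on lo hi s q l z z'" "lo < t" "t < hi"
  shows "(wronskian s u u' z z' has_real_derivative (real l ^ 2 - real k ^ 2) * u t * z t / t) (at t)"
proof -
  have "((\<lambda>r. u r * (s * r * z' r) - z r * (s * r * u' r)) has_real_derivative
      u' t * (s * t * z' t) + (real l ^ 2 / t - q * t) * z t * u t
      - (z' t * (s * t * u' t) + (real k ^ 2 / t - q * t) * u t * z t)) (at t)"
    using assms by (intro DERIV_diff DERIV_mult radial_ode_on_deriv radial_ode_on_flux_deriv)
  moreover have "u' t * (s * t * z' t) + (real l ^ 2 / t - q * t) * z t * u t
      - (z' t * (s * t * u' t) + (real k ^ 2 / t - q * t) * u t * z t)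
      = (real l ^ 2 - real k ^ 2) * u t * z t / t"
    by (cases "t = 0") (simp_all add: field_simps)
  ultimately show ?thesis unfolding wronskian_def[abs_def] by simp
qed

lemma ratio_deriv:
  assumes "(u has_real_derivative u' t) (at t)" "(z has_real_derivative z' t) (at t)"
    and "u t \<noteq> 0" "s * t \<noteq> 0"
  shows "((\<lambda>r. z r / u r) has_real_derivative wronskian s u u' z z' t / (s * t * (u t)\<^sup>2)) (at t)"
proof -
  have "((\<lambda>r. z r / u r) has_real_derivative (z' t * u t - z t * u' t) / (u t * u t)) (at t)"
    by (rule DERIV_divide[OF assms(2,1,3)])
  moreover have "(z' t * u t - z t * u' t) / (u t * u t) = wronskian s u u' z z' t / (s * t * (u t)\<^sup>2)"
    using assms(3,4) by (simp add: wronskian_def field_simps power2_eq_square)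
  ultimately show ?thesis by simp
qed

lemma ratio_decreases_after_negative_critical_point:
  assumes U: "radial_ode_on lo hi s q 0 u u'" and Z: "radial_ode_on lo hi s q 1 z z'"
    and "0 \<le> lo" "0 < s" and upos: "\<And>t. lo < t \<Longrightarrow> t < hi \<Longrightarrow> 0 < u t"
    and x: "lo < x" "x < hi" and neg: "z x < 0"
    and crit: "((\<lambda>r. z r / u r) has_real_derivative 0) (at x)"
  shows "\<forall>\<^sub>F y in at_right x. z y / u y < z x / u x"
proof -
  define W where "W = wronskian s u u' z z'"
  have ratio': "((\<lambda>r. z r / u r) has_real_derivative W y / (s * y * (u y)\<^sup>2)) (at y)"
    if "lo < y" "y < hi" for y
    unfolding W_def using that upos[OF that] assms(3,4)
    by (intro ratio_deriv radial_ode_on_deriv[OF U] radial_ode_on_deriv[OF Z]) auto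
  have "W x / (s * x * (u x)\<^sup>2) = 0" using DERIV_unique[OF ratio'[OF x] crit] .
  then have W0: "W x = 0" using upos[OF x] x assms(3,4) by simp
  have "(W has_real_derivative u x * z x / x) (at x)"
    using wronskian_deriv[OF U Z x] unfolding W_def by simp
  moreover have "u x * z x / x < 0"
    using upos[OF x] neg x assms(3) by (simp add: divide_neg_pos mult_pos_neg)
  ultimately obtain d where d: "0 < d" "\<And>h. 0 < h \<Longrightarrow> h < d \<Longrightarrow> W (x + h) < 0"
    using DERIV_neg_dec_right W0 by metis
  have "z y / u y < z x / u x" if y: "x < y" "y < min (x + d) hi" for y
  proof (rule DERIV_neg_imp_decreasing_open[OF y(1)])
    fix w assume w: "x < w" "w < y"
    then have "W w < 0" "lo < w" "w < hi" using d(2)[of "w - x"] y x by auto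
    moreover have "0 < s * w * (u w)\<^sup>2" using upos[of w] \<open>lo < w\<close> \<open>w < hi\<close> assms(3,4) by simp
    ultimately show "\<exists>l. ((\<lambda>r. z r / u r) has_real_derivative l) (at w) \<and> l < 0"
      using ratio' divide_neg_pos by blast
  next
    show "continuous_on {x..y} (\<lambda>r. z r / u r)"
    proof (intro continuous_at_imp_continuous_on ballI)
      fix w assume "w \<in> {x..y}"
      then have "lo < w" "w < hi" using x y by auto
      then show "isCont (\<lambda>r. z r / u r) w" using DERIV_isCont[OF ratio'] by blast
    qed
  qed
  then show ?thesis
    unfolding eventually_at_right_field using d(1) x by (intro exI[of _ "min (x + d) hi"]) auto
qed

lemma ratio_no_negative_interior_min:
  assumes U: "radial_ode_on lo hi s q 0 u u'" and Z: "radial_ode_on lo hi s q 1 z z'"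
    and "0 \<le> lo" "0 < s" and upos: "\<And>t. lo < t \<Longrightarrow> t < hi \<Longrightarrow> 0 < u t"
    and "lo \<le> a" "a < t" "t < b" "b < hi" and "continuous_on {a..b} (\<lambda>r. z r / u r)"
    and "z t / u t < z a / u a" "z t / u t < z b / u b" "z t < 0"
  shows False
proof (rule no_negative_interior_min[of a t b "\<lambda>r. z r / u r"])
  show "z t / u t < 0" using \<open>z t < 0\<close> upos[of t] assms(6-9) by (simp add: divide_neg_pos)
  fix x assume x: "a < x" "x < b"
  then have x': "lo < x" "x < hi" using assms(6,9) by auto
  have "0 < u x" "x \<noteq> 0" using upos[OF x'] x' assms(3) by auto
  have "((\<lambda>r. z r / u r) has_real_derivative wronskian s u u' z z' x / (s * x * (u x)\<^sup>2)) (at x)"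
    by (rule ratio_deriv) (use radial_ode_on_deriv[OF U x'] radial_ode_on_deriv[OF Z x']
        \<open>0 < u x\<close> \<open>x \<noteq> 0\<close> assms(4) in auto)
  then show "(\<lambda>r. z r / u r) differentiable (at x)"
    by (auto simp: real_differentiable_def)
  assume "z x / u x < 0" "((\<lambda>r. z r / u r) has_real_derivative 0) (at x)"
  then show "\<forall>\<^sub>F y in at_right x. z y / u y < z x / u x"
    using ratio_decreases_after_negative_critical_point[OF U Z assms(3,4) upos x'] \<open>0 < u x\<close>
    by (simp add: divide_less_0_iff)
qed (use assms in auto)

lemma radial_ode_deriv_bound_near_critical_point:
  assumes F: "radial_ode_on lo hi s q 0 f f'" and "0 \<le> lo" "0 < s"
    and "lo < r" "r \<le> y" "y \<le> t" "t < hi" "t \<le> 2 * r" "f' t = 0"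
    and M: "\<And>w. r \<le> w \<Longrightarrow> w \<le> t \<Longrightarrow> \<bar>f w\<bar> \<le> M"
  shows "\<bar>f' y\<bar> \<le> 2 * \<bar>q\<bar> * M * (t - r) / s"
proof -
  have "0 \<le> M" using M[of t] assms(5,6) by force
  have "\<bar>s * t * f' t - s * y * f' y\<bar> \<le> (\<bar>q\<bar> * t * M) * (t - y)"
  proof (rule DERIV_bound_imp_abs_diff_le[OF assms(6)])
    fix w assume w: "y \<le> w" "w \<le> t"
    show "((\<lambda>r. s * r * f' r) has_real_derivative (real 0 ^ 2 / w - q * w) * f w) (at w)"
      using radial_ode_on_flux_deriv[OF F] w assms(4-7) by simp
    have "\<bar>q\<bar> * w * \<bar>f w\<bar> \<le> \<bar>q\<bar> * t * M"
      using M[of w] w assms(2,4,5) \<open>0 \<le> M\<close> by (intro mult_mono) (auto intro: mult_left_mono)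
    then show "\<bar>(real 0 ^ 2 / w - q * w) * f w\<bar> \<le> \<bar>q\<bar> * t * M"
      using w assms(2,4,5) by (simp add: abs_mult)
  qed
  also have "\<dots> \<le> (\<bar>q\<bar> * (2 * y) * M) * (t - r)"
  proof (rule mult_mono)
    show "\<bar>q\<bar> * t * M \<le> \<bar>q\<bar> * (2 * y) * M"
      using assms(5,8) \<open>0 \<le> M\<close> by (intro mult_right_mono mult_left_mono) auto
  qed (use assms(2,4-6) \<open>0 \<le> M\<close> in auto)
  finally have "y * (s * \<bar>f' y\<bar>) \<le> y * (2 * \<bar>q\<bar> * M * (t - r))"
    using \<open>f' t = 0\<close> assms(2-5) by (simp add: abs_mult algebra_simps)
  then have "s * \<bar>f' y\<bar> \<le> 2 * \<bar>q\<bar> * M * (t - r)" using assms(2,4,5) by simp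
  then show ?thesis using assms(3) by (simp add: field_simps)
qed

text \<open>Uniqueness for the Cauchy problem at \<open>t\<close>: on \<open>[t - d, t]\<close> the equation forces
  \<open>f (t - d) \<le> f (t - d) / 2\<close>.\<close>
lemma radial_ode_zero_propagates_left:
  assumes F: "radial_ode_on lo hi s q 0 f f'" and "0 \<le> lo" "0 < s" "lo < t" "t < hi"
    and "f t = 0" "f' t = 0"
    and anti: "\<And>x y. lo < x \<Longrightarrow> x \<le> y \<Longrightarrow> y \<le> t \<Longrightarrow> f y \<le> f x"
  shows "\<exists>y\<in>{lo<..<t}. f y = 0"
proof -
  define d where "d = min ((t - lo) / 2) (min 1 (s / (4 * (\<bar>q\<bar> + 1))))"
  have "0 < d" using assms(3,4) unfolding d_def by simp
  moreover have "d \<le> (t - lo) / 2" "d \<le> 1" "d \<le> s / (4 * (\<bar>q\<bar> + 1))"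
    unfolding d_def by linarith+
  ultimately have d: "0 < d" "d \<le> (t - lo) / 2" "d \<le> 1" "d \<le> s / (4 * (\<bar>q\<bar> + 1))"
    by blast+
  define r where "r = t - d"
  have r: "lo < r" "r < t" "t \<le> 2 * r" using d assms(2) unfolding r_def by auto
  have f_between: "0 \<le> f y" "f y \<le> f r" if "r \<le> y" "y \<le> t" for y
    using anti[of y t] anti[of r y] that r \<open>f t = 0\<close> by auto
  have "\<bar>f t - f r\<bar> \<le> (2 * \<bar>q\<bar> * f r * d / s) * (t - r)"
  proof (rule DERIV_bound_imp_abs_diff_le)
    fix y assume y: "r \<le> y" "y \<le> t"
    show "(f has_real_derivative f' y) (at y)" using radial_ode_on_deriv[OF F] y r assms(5) by simp
    show "\<bar>f' y\<bar> \<le> 2 * \<bar>q\<bar> * f r * d / s"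
      using radial_ode_deriv_bound_near_critical_point[OF F assms(2,3) r(1) y assms(5) r(3) assms(7), of "f r"]
        f_between unfolding r_def by simp
  qed (use r in simp)
  also have "\<dots> = f r * (2 * \<bar>q\<bar> * d * d / s)" unfolding r_def by (simp add: field_simps)
  also have "\<dots> \<le> f r * (1 / 2)"
  proof (rule mult_left_mono)
    have "d * d \<le> s / (4 * (\<bar>q\<bar> + 1))" using d by (meson mult_left_le order_trans less_imp_le)
    have "2 * \<bar>q\<bar> * d * d / s = (2 * \<bar>q\<bar> / s) * (d * d)" by simp
    also have "\<dots> \<le> (2 * \<bar>q\<bar> / s) * (s / (4 * (\<bar>q\<bar> + 1)))"
      using \<open>d * d \<le> _\<close> assms(3) by (intro mult_left_mono) auto
    also have "\<dots> = 2 * \<bar>q\<bar> / (4 * (\<bar>q\<bar> + 1))" using assms(3) by simp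
    also have "\<dots> \<le> 1 / 2" by (simp add: field_simps)
    finally show "2 * \<bar>q\<bar> * d * d / s \<le> 1 / 2" .
  qed (use f_between[of r] r in simp)
  finally have "f r = 0" using f_between[of r] r \<open>f t = 0\<close> by simp
  then show ?thesis using r by auto
qed

lemma radial_ode_flux_bounded:
  assumes F: "radial_ode_on lo hi s q k f f'" and "0 \<le> lo" "lo < c" "c < hi"
    and "continuous_on {c..hi} f"
  shows "\<exists>B. \<forall>x\<in>{c..<hi}. \<bar>s * x * f' x\<bar> \<le> B"
proof -
  have "bounded (f ` {c..hi})"
    by (intro compact_imp_bounded compact_continuous_image assms(5) compact_Icc)
  then obtain M where "\<forall>y\<in>f ` {c..hi}. norm y \<le> M" by (auto simp: bounded_iff)
  then have M: "\<And>x. x \<in> {c..hi} \<Longrightarrow> \<bar>f x\<bar> \<le> M" by auto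
  define C where "C = (real k ^ 2 / c + \<bar>q\<bar> * hi) * M"
  have "\<bar>s * x * f' x\<bar> \<le> \<bar>s * c * f' c\<bar> + C * (hi - c)" if x: "c \<le> x" "x < hi" for x
  proof -
    have "\<bar>s * x * f' x - s * c * f' c\<bar> \<le> C * (x - c)"
    proof (rule DERIV_bound_imp_abs_diff_le[OF x(1)])
      fix w assume w: "c \<le> w" "w \<le> x"
      then show "((\<lambda>r. s * r * f' r) has_real_derivative (real k ^ 2 / w - q * w) * f w) (at w)"
        using radial_ode_on_flux_deriv[OF F] x assms(3) by simp
      have "\<bar>real k ^ 2 / w - q * w\<bar> \<le> real k ^ 2 / c + \<bar>q\<bar> * hi"
      proof -
        have "real k ^ 2 / w \<le> real k ^ 2 / c" using w assms(2,3) by (intro divide_left_mono) auto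
        moreover have "\<bar>q * w\<bar> \<le> \<bar>q\<bar> * hi" using w x assms(2,3) by (simp add: abs_mult mult_left_mono)
        ultimately show ?thesis using w assms(2,3) by (smt (verit) divide_nonneg_pos zero_le_power2)
      qed
      then show "\<bar>(real k ^ 2 / w - q * w) * f w\<bar> \<le> C"
        unfolding C_def abs_mult using M[of w] w x by (intro mult_mono) auto
    qed
    moreover have "C * (x - c) \<le> C * (hi - c)"
      using x M[of c] assms(2,3,4) unfolding C_def by (intro mult_left_mono) auto
    ultimately show ?thesis by linarith
  qed
  then show ?thesis by (intro exI[of _ "\<bar>s * c * f' c\<bar> + C * (hi - c)"]) auto
qed

lemma wronskian_tendsto_zero_at_left:
  assumes U: "radial_ode_on lo hi s q k u u'" and Z: "radial_ode_on lo hi s q l z z'"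
    and "0 \<le> lo" "lo < c" "c < hi"
    and "continuous_on {c..hi} u" "continuous_on {c..hi} z" "u hi = 0" "z hi = 0"
  shows "(wronskian s u u' z z' \<longlongrightarrow> 0) (at_left hi)"
proof -
  obtain Bu where Bu: "\<forall>x\<in>{c..<hi}. \<bar>s * x * u' x\<bar> \<le> Bu"
    using radial_ode_flux_bounded[OF U assms(3-6)] by blast
  obtain Bz where Bz: "\<forall>x\<in>{c..<hi}. \<bar>s * x * z' x\<bar> \<le> Bz"
    using radial_ode_flux_bounded[OF Z assms(3-5,7)] by blast
  have "(u \<longlongrightarrow> 0) (at_left hi)" "(z \<longlongrightarrow> 0) (at_left hi)"
    using continuous_on_Icc_at_leftD[OF assms(6,5)] continuous_on_Icc_at_leftD[OF assms(7,5)] assms(8,9)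
    by simp_all
  moreover have "\<forall>\<^sub>F x in at_left hi. norm (s * x * z' x) \<le> Bz"
    "\<forall>\<^sub>F x in at_left hi. norm (s * x * u' x) \<le> Bu"
    using Bu Bz assms(5) unfolding eventually_at_left_field by (auto intro!: exI[of _ c])
  ultimately have "((\<lambda>x. u x * (s * x * z' x) - z x * (s * x * u' x)) \<longlongrightarrow> 0 - 0) (at_left hi)"
    by (intro tendsto_diff lim_null_mult_right_bounded)
  then show ?thesis unfolding wronskian_def[abs_def] by simp
qed

section \<open>The nonnegative eigenfunction\<close>

definition slope_bound :: "real \<Rightarrow> real \<Rightarrow> real \<Rightarrow> real" where
  "slope_bound \<kappa> r0 R = R / (r0 * (R - r0)) + \<kappa> * R\<^sup>2 / (2 * r0)"

definition alpha_bound :: "real \<Rightarrow> real \<Rightarrow> real \<Rightarrow> real" where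
  "alpha_bound \<kappa> r0 R =
     r0 / (2 * (r0 * (slope_bound \<kappa> r0 R)\<^sup>2 + slope_bound \<kappa> r0 R * (R - r0) / r0))"

lemma slope_bound_pos: "0 < \<kappa> \<Longrightarrow> 0 < r0 \<Longrightarrow> r0 < R \<Longrightarrow> 0 < slope_bound \<kappa> r0 R"
  unfolding slope_bound_def by (intro add_pos_pos) auto

lemma alpha_bound_pos: "0 < \<kappa> \<Longrightarrow> 0 < r0 \<Longrightarrow> r0 < R \<Longrightarrow> 0 < alpha_bound \<kappa> r0 R"
  unfolding alpha_bound_def using slope_bound_pos[of \<kappa> r0 R] by (simp add: add_pos_pos)

text \<open>The unpacked \<^const>\<open>radial_eigenfunction\<close> together with \<open>u \<ge> 0\<close>.\<close>
locale nonneg_eigenprofile =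
  fixes \<kappa> r0 R \<alpha> lam :: real and u du :: "real \<Rightarrow> real" and a b :: real
  assumes kappa_pos: "0 < \<kappa>" and r0_pos: "0 < r0" and r0_less_R: "r0 < R"
    and alpha_nonneg: "0 \<le> \<alpha>"
    and u_cont: "continuous_on {0..R} u"
    and u_ode: "solves_radial_ode \<kappa> r0 \<alpha> R lam 0 u du"
    and du_left: "(du \<longlongrightarrow> a) (at_left r0)" and du_right: "(du \<longlongrightarrow> b) (at_right r0)"
    and flux_continuous: "b = (1 + \<alpha> * \<kappa>) * a"
    and u_R: "u R = 0" and u_nontrivial: "\<exists>r\<in>{0..R}. u r \<noteq> 0"
    and u_nonneg: "\<And>r. r \<in> {0..R} \<Longrightarrow> 0 \<le> u r"
begin

lemma sigma_ge_1: "1 \<le> 1 + \<alpha> * \<kappa>"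
  using alpha_nonneg kappa_pos by simp

lemma u_inner: "radial_ode_on 0 r0 (1 + \<alpha> * \<kappa>) (lam + \<kappa>) 0 u du"
  using solves_radial_ode_inner[OF u_ode r0_pos] .

lemma u_outer: "radial_ode_on r0 R 1 lam 0 u du"
  using solves_radial_ode_outer[OF u_ode r0_pos] .

lemma du_deriv: "0 < t \<Longrightarrow> t < R \<Longrightarrow> t \<noteq> r0 \<Longrightarrow> (u has_real_derivative du t) (at t)"
  using radial_ode_on_deriv[OF u_inner] radial_ode_on_deriv[OF u_outer] by (cases "t < r0") auto

lemma inner_flux_deriv: "0 < t \<Longrightarrow> t < r0 \<Longrightarrow>
    ((\<lambda>r. (1 + \<alpha> * \<kappa>) * r * du r) has_real_derivative - ((lam + \<kappa>) * t * u t)) (at t)"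
  using radial_ode_on_flux_deriv[OF u_inner] by simp

lemma outer_flux_deriv: "r0 < t \<Longrightarrow> t < R \<Longrightarrow>
    ((\<lambda>r. r * du r) has_real_derivative - (lam * t * u t)) (at t)"
  using radial_ode_on_flux_deriv[OF u_outer] by simp

lemma u_continuous_on: "0 \<le> x \<Longrightarrow> y \<le> R \<Longrightarrow> continuous_on {x..y} u"
  using continuous_on_subset[OF u_cont] by auto

lemma u_tendsto_left_r0: "(u \<longlongrightarrow> u r0) (at_left r0)"
  using continuous_on_Icc_at_leftD[OF u_continuous_on[of 0 r0]] r0_pos r0_less_R by simp

lemma u_tendsto_right_r0: "(u \<longlongrightarrow> u r0) (at_right r0)"
  using continuous_on_Icc_at_rightD[OF u_continuous_on[of r0 R]] r0_pos r0_less_R by simp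

lemma du_zero_at_zero:
  assumes "0 < t" "t < R" "t \<noteq> r0" "u t = 0"
  shows "du t = 0"
proof (rule DERIV_local_min[OF du_deriv[OF assms(1-3)], of "min t (R - t)"])
  show "0 < min t (R - t)" using assms(1,2) by auto
  show "\<forall>y. \<bar>t - y\<bar> < min t (R - t) \<longrightarrow> u t \<le> u y"
    using assms(4) u_nonneg by (auto simp: abs_less_iff)
qed

lemma inner_flux_sign:
  assumes "0 < x" "x \<le> y" "y < r0"
  shows "lam + \<kappa> \<le> 0 \<Longrightarrow> x * du x \<le> y * du y"
    and "0 \<le> lam + \<kappa> \<Longrightarrow> y * du y \<le> x * du x"
proof -
  have nonneg: "0 \<le> t * u t" if "0 < t" "t < r0" for t
    using u_nonneg[of t] that r0_less_R by simp
  show "x * du x \<le> y * du y" if "lam + \<kappa> \<le> 0"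
  proof -
    have "(1 + \<alpha> * \<kappa>) * x * du x \<le> (1 + \<alpha> * \<kappa>) * y * du y"
      by (rule DERIV_nonneg_on_open_imp_nondecreasing[OF inner_flux_deriv])
         (use nonneg that assms in \<open>auto simp: mult_nonpos_nonneg mult.assoc\<close>)
    then show ?thesis using sigma_ge_1 by (simp add: mult.assoc)
  qed
  show "y * du y \<le> x * du x" if "0 \<le> lam + \<kappa>"
  proof -
    have "(1 + \<alpha> * \<kappa>) * y * du y \<le> (1 + \<alpha> * \<kappa>) * x * du x"
      by (rule DERIV_nonpos_on_open_imp_nonincreasing[OF inner_flux_deriv])
         (use nonneg that assms in \<open>auto simp: mult.assoc\<close>)
    then show ?thesis using sigma_ge_1 by (simp add: mult.assoc)
  qed
qed

lemma du_inner_nonneg_if: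
  assumes "lam + \<kappa> \<le> 0" "0 < t" "t < r0"
  shows "0 \<le> du t"
proof -
  have "- du t \<le> 0"
  proof (rule flux_nonincreasing_imp_deriv_nonpos[where f = "\<lambda>r. - u r" and f' = "\<lambda>r. - du r"])
    show "continuous_on {0..t} (\<lambda>r. - u r)"
      using u_continuous_on[of 0 t] assms r0_less_R by (intro continuous_on_minus) auto
    show "((\<lambda>r. - u r) has_real_derivative - du x) (at x)" if "0 < x" "x < t" for x
      using du_deriv[of x] that assms r0_less_R by (intro DERIV_minus) auto
    show "t * - du t \<le> x * - du x" if "0 < x" "x < t" for x
      using inner_flux_sign(1)[of x t] that assms by simp
  qed (use assms in auto)
  then show ?thesis by simp
qed

lemma du_outer_nonneg_if:
  assumes "lam + \<kappa> \<le> 0" "r0 < t" "t < R"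
  shows "0 \<le> du t"
proof -
  have "0 \<le> a"
    by (rule tendsto_at_left_lowerbound[OF r0_pos du_left]) (use du_inner_nonneg_if assms in auto)
  then have "0 \<le> r0 * b" using flux_continuous sigma_ge_1 r0_pos by simp
  also have "r0 * b \<le> t * du t"
  proof (rule DERIV_nonneg_imp_ge_limit_at_right[OF outer_flux_deriv])
    show "((\<lambda>r. r * du r) \<longlongrightarrow> r0 * b) (at_right r0)" by (intro tendsto_intros du_right)
    show "0 \<le> - (lam * x * u x)" if "r0 < x" "x < R" for x
      using u_nonneg[of x] that assms kappa_pos r0_pos
      by (simp add: mult_nonpos_nonneg mult_nonneg_nonneg)
  qed (use assms in auto)
  finally show ?thesis using assms r0_pos by (simp add: zero_le_mult_iff)
qed

lemma lam_plus_kappa_pos: "0 < lam + \<kappa>"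
proof (rule ccontr)
  assume "\<not> 0 < lam + \<kappa>"
  then have "0 \<le> du x" if "x \<in> {0<..<R} - {r0}" for x
    using that du_inner_nonneg_if du_outer_nonneg_if by (cases "x < r0") auto
  then have "mono_on {0..R} u"
    using du_deriv r0_pos r0_less_R by (intro piecewise_DERIV_nonneg_imp_mono_on[OF u_cont, of r0 du]) auto
  then have "u r = 0" if "r \<in> {0..R}" for r
    using mono_onD[of "{0..R}" u r R] u_nonneg[OF that] that u_R r0_pos r0_less_R by auto
  then show False using u_nontrivial by blast
qed

lemma du_inner_nonpos: "0 < t \<Longrightarrow> t < r0 \<Longrightarrow> du t \<le> 0"
  by (rule flux_nonincreasing_imp_deriv_nonpos[of t u])
     (use u_continuous_on[of 0 t] r0_less_R du_deriv inner_flux_sign(2) lam_plus_kappa_pos in auto)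

lemma a_nonpos: "a \<le> 0"
  by (rule tendsto_at_left_upperbound[OF r0_pos du_left]) (use du_inner_nonpos in auto)

lemma b_nonpos: "b \<le> 0"
  using a_nonpos sigma_ge_1 flux_continuous by (simp add: mult_nonneg_nonpos)

lemma b_le_a: "b \<le> a"
  using mult_right_mono_neg[OF sigma_ge_1 a_nonpos] flux_continuous by simp

lemma du_outer_nonpos:
  assumes "r0 < t" "t < R"
  shows "du t \<le> 0"
proof (cases "0 \<le> lam")
  case True
  have "t * du t \<le> r0 * b"
  proof (rule DERIV_nonpos_imp_le_limit_at_right[OF outer_flux_deriv])
    show "((\<lambda>r. r * du r) \<longlongrightarrow> r0 * b) (at_right r0)" by (intro tendsto_intros du_right)
    show "- (lam * x * u x) \<le> 0" if "r0 < x" "x < R" for x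
      using u_nonneg[of x] that True r0_pos by simp
  qed (use assms in auto)
  also have "\<dots> \<le> 0" using b_nonpos r0_pos by (simp add: mult_nonneg_nonpos)
  finally show ?thesis using assms r0_pos by (simp add: mult_le_0_iff)
next
  case False
  show ?thesis
  proof (rule ccontr)
    assume "\<not> du t \<le> 0"
    have "u t < u R"
    proof (rule DERIV_pos_imp_increasing_open[OF assms(2)])
      fix x assume x: "t < x" "x < R"
      have "t * du t \<le> x * du x"
        by (rule DERIV_nonneg_on_open_imp_nondecreasing[OF outer_flux_deriv, of r0 R])
           (use u_nonneg False r0_pos assms x in \<open>auto simp: mult_nonpos_nonneg\<close>)
      moreover have "0 < t * du t" using \<open>\<not> du t \<le> 0\<close> assms r0_pos by simp
      ultimately have "0 < x * du x" by linarith
      then have "0 < du x" using x assms r0_pos by (simp add: zero_less_mult_iff)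
      then show "\<exists>y. (u has_real_derivative y) (at x) \<and> 0 < y" using du_deriv[of x] x assms r0_pos by auto
    qed (use u_continuous_on[of t R] assms r0_pos in auto)
    then show False using u_R u_nonneg[of t] assms r0_pos by simp
  qed
qed

lemma u_antimono: "antimono_on {0..R} u"
proof (rule piecewise_DERIV_nonpos_imp_antimono_on[OF u_cont, of r0 du])
  fix x assume "x \<in> {0<..<R} - {r0}"
  then show "(u has_real_derivative du x) (at x)" "du x \<le> 0"
    using du_deriv du_inner_nonpos du_outer_nonpos by (auto simp: linorder_neq_iff)
qed (use r0_pos r0_less_R in auto)

lemma u_antimonoD: "0 \<le> x \<Longrightarrow> x \<le> y \<Longrightarrow> y \<le> R \<Longrightarrow> u y \<le> u x"
  using monotone_onD[OF u_antimono] by auto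

lemma u_r0_pos: "0 < u r0"
proof (rule ccontr)
  assume "\<not> 0 < u r0"
  then have u_r0: "u r0 = 0" using u_nonneg[of r0] r0_pos r0_less_R by simp
  have "b = 0"
  proof (rule antisym[OF b_nonpos])
    have "du t = 0" if "r0 < t" "t < R" for t
      using du_zero_at_zero[of t] u_antimonoD[of r0 t] u_nonneg[of t] u_r0 that r0_pos by simp
    then show "0 \<le> b" by (intro tendsto_at_right_lowerbound[OF r0_less_R du_right]) auto
  qed
  then have "a = 0" using flux_continuous sigma_ge_1 by simp
  have "0 \<le> du x" if "0 < x" "x < r0" for x
  proof -
    have "(1 + \<alpha> * \<kappa>) * r0 * a \<le> (1 + \<alpha> * \<kappa>) * x * du x"
    proof (rule DERIV_nonpos_imp_ge_limit_at_left[OF inner_flux_deriv])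
      show "((\<lambda>r. (1 + \<alpha> * \<kappa>) * r * du r) \<longlongrightarrow> (1 + \<alpha> * \<kappa>) * r0 * a) (at_left r0)"
        by (intro tendsto_intros du_left)
      show "- ((lam + \<kappa>) * t * u t) \<le> 0" if "0 < t" "t < r0" for t
        using u_nonneg[of t] lam_plus_kappa_pos that r0_less_R by simp
    qed (use that in auto)
    then have "0 \<le> ((1 + \<alpha> * \<kappa>) * x) * du x" using \<open>a = 0\<close> by simp
    moreover have "0 < (1 + \<alpha> * \<kappa>) * x" using sigma_ge_1 that by simp
    ultimately show ?thesis by (simp add: zero_le_mult_iff)
  qed
  moreover have "continuous_on {0..r0} u" using u_continuous_on r0_less_R by simp
  ultimately have "mono_on {0..r0} u"
    using du_deriv r0_pos r0_less_R by (intro piecewise_DERIV_nonneg_imp_mono_on[where m = r0 and f' = du]) auto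
  then have "u 0 \<le> 0" using mono_onD[of "{0..r0}" u 0 r0] u_r0 r0_pos by simp
  then have "u r = 0" if "r \<in> {0..R}" for r
    using u_antimonoD[of 0 r] u_nonneg[OF that] that by auto
  then show False using u_nontrivial by blast
qed

lemma u_pos:
  assumes "0 \<le> t" "t < R"
  shows "0 < u t"
proof (rule ccontr)
  assume "\<not> 0 < u t"
  then have "u t = 0" using u_nonneg[of t] assms by simp
  define Z where "Z = {x \<in> {r0..R}. u x = 0}"
  have "r0 < t"
  proof (rule ccontr)
    assume "\<not> r0 < t"
    then have "u r0 \<le> u t" using u_antimonoD[of t r0] assms r0_less_R by simp
    then show False using u_r0_pos \<open>u t = 0\<close> by simp
  qed
  then have "t \<in> Z" using \<open>u t = 0\<close> assms by (simp add: Z_def)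
  have "continuous_on {r0..R} u" using u_continuous_on r0_pos by simp
  then have "closed Z" unfolding Z_def by (rule continuous_closed_preimage_constant) simp
  moreover have "bdd_below Z" unfolding Z_def by (rule bdd_belowI[of _ r0]) simp
  ultimately have "Inf Z \<in> Z" using closed_contains_Inf \<open>t \<in> Z\<close> by blast
  define ts where "ts = Inf Z"
  have ts: "u ts = 0" "r0 \<le> ts" "ts \<le> t"
    using \<open>Inf Z \<in> Z\<close> cInf_lower[OF \<open>t \<in> Z\<close> \<open>bdd_below Z\<close>] unfolding ts_def Z_def by auto
  have "ts \<noteq> r0" using ts u_r0_pos by auto
  then have ts_in: "r0 < ts" "ts < R" using ts assms by auto
  have "du ts = 0" using du_zero_at_zero[of ts] ts(1) ts_in r0_pos by simp
  moreover have "u y \<le> u x" if "r0 < x" "x \<le> y" "y \<le> ts" for x y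
    using u_antimonoD[of x y] that ts_in r0_pos by simp
  ultimately obtain y where y: "r0 < y" "y < ts" "u y = 0"
    using radial_ode_zero_propagates_left[OF u_outer less_imp_le[OF r0_pos] zero_less_one ts_in ts(1)]
    by auto
  then have "y \<in> Z" using ts_in by (simp add: Z_def)
  then show False using cInf_lower[OF _ \<open>bdd_below Z\<close>, of y] y(2) unfolding ts_def by simp
qed

lemma outer_flux_le:
  assumes "r0 < t" "t < R"
  shows "t * du t \<le> r0 * b + \<kappa> * u r0 * R\<^sup>2 / 2"
proof -
  define H where "H r = r * du r - \<kappa> * u r0 * r\<^sup>2 / 2" for r
  have "H t \<le> r0 * b - \<kappa> * u r0 * r0\<^sup>2 / 2"
  proof (rule DERIV_nonpos_imp_le_limit_at_right[where f = H])
    show "(H \<longlongrightarrow> r0 * b - \<kappa> * u r0 * r0\<^sup>2 / 2) (at_right r0)"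
      unfolding H_def by (intro tendsto_intros du_right) simp
    fix x assume x: "r0 < x" "x < R"
    have "((\<lambda>r. \<kappa> * u r0 * r\<^sup>2 / 2) has_real_derivative \<kappa> * u r0 * x) (at x)"
      by (auto intro!: derivative_eq_intros)
    from DERIV_diff[OF outer_flux_deriv[OF x] this]
    show "(H has_real_derivative - (lam * x * u x) - \<kappa> * u r0 * x) (at x)"
      unfolding H_def by simp
    have "0 \<le> u x" "u x \<le> u r0" using u_nonneg[of x] u_antimonoD[of r0 x] x r0_pos by auto
    then have "- lam * (x * u x) \<le> \<kappa> * (x * u r0)"
      using lam_plus_kappa_pos x r0_pos kappa_pos
      by (intro mult_mono) (auto intro: mult_left_mono)
    then show "- (lam * x * u x) - \<kappa> * u r0 * x \<le> 0" by (simp add: algebra_simps)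
  qed (use assms in auto)
  moreover have "\<kappa> * u r0 * t\<^sup>2 \<le> \<kappa> * u r0 * R\<^sup>2"
    using assms r0_pos kappa_pos u_r0_pos by (intro mult_left_mono power_mono) auto
  moreover have "0 \<le> \<kappa> * u r0 * r0\<^sup>2" using kappa_pos u_r0_pos by simp
  ultimately show ?thesis unfolding H_def by linarith
qed

lemma neg_b_le: "- b \<le> slope_bound \<kappa> r0 R * u r0"
proof (cases "0 < r0 * b + \<kappa> * u r0 * R\<^sup>2 / 2")
  case True
  then have "- b < \<kappa> * R\<^sup>2 / (2 * r0) * u r0" using r0_pos by (simp add: field_simps)
  moreover have "0 \<le> R / (r0 * (R - r0)) * u r0" using r0_pos r0_less_R u_r0_pos by simp
  ultimately show ?thesis unfolding slope_bound_def by (simp add: algebra_simps)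
next
  case False
  define C where "C = r0 * b + \<kappa> * u r0 * R\<^sup>2 / 2"
  have "C \<le> 0" using False by (simp add: C_def)
  have slope: "du t \<le> C / R" if "r0 < t" "t < R" for t
  proof -
    have "du t \<le> C / t" using outer_flux_le[OF that] that r0_pos by (simp add: C_def field_simps)
    also have "\<dots> \<le> C / R" using \<open>C \<le> 0\<close> that r0_pos by (intro divide_left_mono_neg) auto
    finally show ?thesis .
  qed
  have "continuous_on {r0..R} u" using u_continuous_on r0_pos by simp
  moreover have "u differentiable (at x)" if "r0 < x" "x < R" for x
    using du_deriv[of x] that r0_pos by (auto simp: real_differentiable_def)
  ultimately obtain l \<xi> where
    \<xi>: "r0 < \<xi>" "\<xi> < R" "(u has_real_derivative l) (at \<xi>)" "u R - u r0 = (R - r0) * l"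
    using MVT[OF r0_less_R] by blast
  then have "u R - u r0 = (R - r0) * du \<xi>"
    using DERIV_unique[OF \<xi>(3) du_deriv[of \<xi>]] r0_pos by simp
  moreover have "(R - r0) * du \<xi> \<le> (R - r0) * (C / R)"
    using slope[OF \<xi>(1,2)] r0_less_R by (intro mult_left_mono) auto
  ultimately have "- u r0 \<le> (R - r0) * (C / R)" using u_R by simp
  then have "- (r0 * b) \<le> R / (R - r0) * u r0 + \<kappa> * u r0 * R\<^sup>2 / 2"
    using r0_less_R r0_pos unfolding C_def by (simp add: field_simps)
  then have "- b \<le> (R / (R - r0) * u r0 + \<kappa> * u r0 * R\<^sup>2 / 2) / r0"
    using r0_pos by (simp add: pos_le_divide_eq mult.commute)
  also have "\<dots> = slope_bound \<kappa> r0 R * u r0"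
    unfolding slope_bound_def using r0_pos r0_less_R by (simp add: field_simps)
  finally show ?thesis .
qed

subsection \<open>Maximum principle for \<open>z / u\<close>\<close>

lemma ratio_inner_deriv:
  assumes "radial_ode_on 0 r0 (1 + \<alpha> * \<kappa>) (lam + \<kappa>) 1 z dz" "0 < x" "x < r0"
  shows "((\<lambda>r. z r / u r) has_real_derivative
           wronskian (1 + \<alpha> * \<kappa>) u du z dz x / ((1 + \<alpha> * \<kappa>) * x * (u x)\<^sup>2)) (at x)"
  using radial_ode_on_deriv[OF u_inner] radial_ode_on_deriv[OF assms(1)] u_pos[of x] sigma_ge_1
    assms(2,3) r0_less_R
  by (intro ratio_deriv) auto

lemma ratio_outer_deriv:
  assumes "radial_ode_on r0 R 1 lam 1 z dz" "r0 < x" "x < R"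
  shows "((\<lambda>r. z r / u r) has_real_derivative wronskian 1 u du z dz x / (1 * x * (u x)\<^sup>2)) (at x)"
  using radial_ode_on_deriv[OF u_outer] radial_ode_on_deriv[OF assms(1)] u_pos[of x] assms(2,3) r0_pos
  by (intro ratio_deriv) auto

lemma ratio_outer_continuous_on:
  assumes "radial_ode_on r0 R 1 lam 1 z dz" "r0 < x" "y < R"
  shows "continuous_on {x..y} (\<lambda>r. z r / u r)"
proof (intro continuous_at_imp_continuous_on ballI)
  fix w assume "w \<in> {x..y}"
  then show "isCont (\<lambda>r. z r / u r) w"
    using DERIV_isCont[OF ratio_outer_deriv[OF assms(1)]] assms(2,3) by simp
qed

lemma inner_max_principle:
  assumes Z: "radial_ode_on 0 r0 (1 + \<alpha> * \<kappa>) (lam + \<kappa>) 1 z dz"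
    and "continuous_on {0..<r0} z" "z 0 = 0" "(z \<longlongrightarrow> zi) (at_left r0)" "0 \<le> zi"
    and "0 < t" "t < r0"
  shows "0 \<le> z t"
proof (rule ccontr)
  assume "\<not> 0 \<le> z t"
  then have "z t / u t < 0" using u_pos[of t] assms(6,7) r0_less_R by (simp add: divide_neg_pos)
  also have "0 \<le> zi / u r0" using assms(5) u_r0_pos by simp
  finally obtain h where h: "t < h" "h < r0" "z t / u t < z h / u h"
    using tendsto_at_left_exceeds[OF tendsto_divide[OF assms(4) u_tendsto_left_r0]] assms(7)
      u_r0_pos by (metis less_irrefl)
  show False
  proof (rule ratio_no_negative_interior_min[OF u_inner Z _ _ _ _ assms(6) h(1)])
    have "{0..h} \<subseteq> {0..<r0}" using h by auto
    moreover have "u r \<noteq> 0" if "r \<in> {0..h}" for r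
      using u_pos[of r] that h r0_less_R by simp
    ultimately show "continuous_on {0..h} (\<lambda>r. z r / u r)"
      using continuous_on_subset[OF assms(2)] u_continuous_on[of 0 h] h r0_less_R
      by (intro continuous_on_divide) auto
    show "z t / u t < z 0 / u 0" using \<open>z t / u t < 0\<close> assms(3) by simp
  qed (use h \<open>\<not> 0 \<le> z t\<close> u_pos r0_less_R sigma_ge_1 in auto)
qed

lemma inner_ratio_nonneg_if_wronskian_nonneg:
  assumes Z: "radial_ode_on 0 r0 (1 + \<alpha> * \<kappa>) (lam + \<kappa>) 1 z dz"
    and "continuous_on {0..<r0} z" "z 0 = 0"
    and W: "\<And>y. 0 < y \<Longrightarrow> y < r0 \<Longrightarrow> 0 \<le> wronskian (1 + \<alpha> * \<kappa>) u du z dz y"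
    and "0 < x" "x < r0"
  shows "0 \<le> z x / u x"
proof -
  have "z 0 / u 0 \<le> z x / u x"
  proof (rule DERIV_nonneg_imp_increasing_open[of 0 x])
    fix y assume y: "0 < y" "y < x"
    then have "0 \<le> wronskian (1 + \<alpha> * \<kappa>) u du z dz y / ((1 + \<alpha> * \<kappa>) * y * (u y)\<^sup>2)"
      using W[of y] sigma_ge_1 assms(6) by simp
    then show "\<exists>l. ((\<lambda>r. z r / u r) has_real_derivative l) (at y) \<and> 0 \<le> l"
      using ratio_inner_deriv[OF Z, of y] y assms(6) by auto
  next
    have "{0..x} \<subseteq> {0..<r0}" using assms(6) by auto
    moreover have "u r \<noteq> 0" if "r \<in> {0..x}" for r using u_pos[of r] that assms(6) r0_less_R by simp
    ultimately show "continuous_on {0..x} (\<lambda>r. z r / u r)"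
      using continuous_on_subset[OF assms(2)] u_continuous_on[of 0 x] assms(6) r0_less_R
      by (intro continuous_on_divide) auto
  qed (use assms(5) in simp)
  then show ?thesis using assms(3) by simp
qed

lemma outer_ratio_rises:
  assumes Z: "radial_ode_on r0 R 1 lam 1 z dz" and zc: "continuous_on {r0<..R} z" "z R = 0"
    and t: "r0 < t" "t < R" "z t < 0"
  shows "\<exists>y\<in>{t<..<R}. z t / u t < z y / u y"
proof (rule ccontr)
  assume "\<not> ?thesis"
  then have below: "z y / u y \<le> z t / u t" if "t < y" "y < R" for y
    using that by force
  define W where "W = wronskian 1 u du z dz"
  have W': "(W has_real_derivative u x * z x / x) (at x)" if "r0 < x" "x < R" for x
    using wronskian_deriv[OF u_outer Z that] unfolding W_def by simp
  have W'_neg: "u x * z x / x < 0" if "t < x" "x < R" for x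
  proof -
    have "z x / u x < 0"
      using below[OF that] t u_pos[of t] r0_pos by (smt (verit) divide_neg_pos)
    then show ?thesis
      using u_pos[of x] that t r0_pos by (simp add: divide_less_0_iff mult_pos_neg)
  qed
  have "(W \<longlongrightarrow> 0) (at_left R)" unfolding W_def
    by (rule wronskian_tendsto_zero_at_left[OF u_outer Z _ t(1,2)])
       (use u_continuous_on[of t R] continuous_on_subset[OF zc(1)] t u_R zc(2) r0_pos
         in \<open>auto simp: subset_iff\<close>)
  then have W_pos: "0 < W x" if "t < x" "x < R" for x
    using DERIV_neg_imp_gt_limit_at_left[of t R W, OF W' W'_neg] that t by simp
  define y where "y = (t + R) / 2"
  have y: "t < y" "y < R" using t by (auto simp: y_def)
  have "z t / u t < z y / u y"
  proof (rule DERIV_pos_imp_increasing_open[OF y(1)])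
    fix x assume "t < x" "x < y"
    then have "0 < W x / (1 * x * (u x)\<^sup>2)" using W_pos[of x] u_pos[of x] y t r0_pos by simp
    then show "\<exists>l. ((\<lambda>r. z r / u r) has_real_derivative l) (at x) \<and> 0 < l"
      using ratio_outer_deriv[OF Z, of x] \<open>t < x\<close> \<open>x < y\<close> y t unfolding W_def by force
  qed (rule ratio_outer_continuous_on[OF Z t(1) y(2)])
  then show False using below[OF y] by simp
qed

lemma outer_max_principle:
  assumes Z: "radial_ode_on r0 R 1 lam 1 z dz" and "continuous_on {r0<..R} z" "z R = 0"
    and "(z \<longlongrightarrow> ze) (at_right r0)" "0 \<le> ze" and "r0 < t" "t < R"
  shows "0 \<le> z t"
proof (rule ccontr)
  assume "\<not> 0 \<le> z t"
  then have "z t / u t < 0" using u_pos[of t] assms(6,7) r0_pos by (simp add: divide_neg_pos)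
  also have "0 \<le> ze / u r0" using assms(5) u_r0_pos by simp
  finally obtain l where l: "r0 < l" "l < t" "z t / u t < z l / u l"
    using tendsto_at_right_exceeds[OF tendsto_divide[OF assms(4) u_tendsto_right_r0]] assms(6)
      u_r0_pos by (metis less_irrefl)
  obtain y where y: "t < y" "y < R" "z t / u t < z y / u y"
    using outer_ratio_rises[OF assms(1-3,6,7)] \<open>\<not> 0 \<le> z t\<close> by auto
  show False
    by (rule ratio_no_negative_interior_min[OF u_outer Z _ _ _ _ l(2) y(1)])
       (use l y \<open>\<not> 0 \<le> z t\<close> u_pos r0_pos ratio_outer_continuous_on[OF Z l(1) y(2)] in auto)
qed

end

section \<open>Sign of \<open>z\<^sub>1\<close>\<close>

locale z_solution = nonneg_eigenprofile +
  fixes z dz :: "real \<Rightarrow> real" and zi ze dzi dze :: real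
  assumes z_cont_inner: "continuous_on {0..<r0} z" and z_cont_outer: "continuous_on {r0<..R} z"
    and z_ode: "solves_radial_ode \<kappa> r0 \<alpha> R lam 1 z dz"
    and z_left: "(z \<longlongrightarrow> zi) (at_left r0)" and z_right: "(z \<longlongrightarrow> ze) (at_right r0)"
    and dz_left: "(dz \<longlongrightarrow> dzi) (at_left r0)" and dz_right: "(dz \<longlongrightarrow> dze) (at_right r0)"
    and flux_jump: "dze - (1 + \<alpha> * \<kappa>) * dzi = - \<kappa> * u r0"
    and z_jump: "ze - zi = - (b - a)"
    and z_0: "z 0 = 0" and z_R: "z R = 0"
begin

lemma z_inner: "radial_ode_on 0 r0 (1 + \<alpha> * \<kappa>) (lam + \<kappa>) 1 z dz"
  using solves_radial_ode_inner[OF z_ode r0_pos] .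

lemma z_outer: "radial_ode_on r0 R 1 lam 1 z dz"
  using solves_radial_ode_outer[OF z_ode r0_pos] .

lemma z_inner_nonpos_if: "zi \<le> 0 \<Longrightarrow> 0 < t \<Longrightarrow> t < r0 \<Longrightarrow> z t \<le> 0"
  using inner_max_principle[OF radial_ode_on_uminus[OF z_inner] continuous_on_minus[OF z_cont_inner]
      _ tendsto_minus[OF z_left]] z_0 by simp

lemma z_inner_nonneg_if: "0 \<le> zi \<Longrightarrow> 0 < t \<Longrightarrow> t < r0 \<Longrightarrow> 0 \<le> z t"
  using inner_max_principle[OF z_inner z_cont_inner z_0 z_left] by simp

lemma z_outer_nonpos_if: "ze \<le> 0 \<Longrightarrow> r0 < t \<Longrightarrow> t < R \<Longrightarrow> z t \<le> 0"
  using outer_max_principle[OF radial_ode_on_uminus[OF z_outer] continuous_on_minus[OF z_cont_outer]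
      _ tendsto_minus[OF z_right]] z_R by simp

lemma z_outer_nonneg_if: "0 \<le> ze \<Longrightarrow> r0 < t \<Longrightarrow> t < R \<Longrightarrow> 0 \<le> z t"
  using outer_max_principle[OF z_outer z_cont_outer z_R z_right] by simp

lemma inner_wronskian_deriv: "0 < x \<Longrightarrow> x < r0 \<Longrightarrow>
    (wronskian (1 + \<alpha> * \<kappa>) u du z dz has_real_derivative u x * z x / x) (at x)"
  using wronskian_deriv[OF u_inner z_inner] by simp

lemma outer_wronskian_deriv: "r0 < x \<Longrightarrow> x < R \<Longrightarrow>
    (wronskian 1 u du z dz has_real_derivative u x * z x / x) (at x)"
  using wronskian_deriv[OF u_outer z_outer] by simp

lemma inner_wronskian_tendsto:
  "(wronskian (1 + \<alpha> * \<kappa>) u du z dz \<longlongrightarrow> r0 * ((1 + \<alpha> * \<kappa>) * u r0 * dzi - zi * b)) (at_left r0)"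
proof -
  have "(wronskian (1 + \<alpha> * \<kappa>) u du z dz \<longlongrightarrow>
      u r0 * ((1 + \<alpha> * \<kappa>) * r0 * dzi) - zi * ((1 + \<alpha> * \<kappa>) * r0 * a)) (at_left r0)"
    unfolding wronskian_def[abs_def] by (intro tendsto_intros u_tendsto_left_r0 z_left dz_left du_left)
  then show ?thesis by (simp add: flux_continuous algebra_simps)
qed

lemma outer_wronskian_tendsto:
  "(wronskian 1 u du z dz \<longlongrightarrow> r0 * (u r0 * dze - ze * b)) (at_right r0)"
proof -
  have "(wronskian 1 u du z dz \<longlongrightarrow> u r0 * (1 * r0 * dze) - ze * (1 * r0 * b)) (at_right r0)"
    unfolding wronskian_def[abs_def] by (intro tendsto_intros u_tendsto_right_r0 z_right dz_right du_right)
  then show ?thesis by (simp add: algebra_simps)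
qed

lemma outer_wronskian_tendsto_R: "(wronskian 1 u du z dz \<longlongrightarrow> 0) (at_left R)"
proof (rule wronskian_tendsto_zero_at_left[OF u_outer z_outer _ _ _ _ _ u_R z_R])
  define c where "c = (r0 + R) / 2"
  show "r0 < c" "c < R" using r0_less_R by (auto simp: c_def)
  show "continuous_on {c..R} u" using u_continuous_on \<open>r0 < c\<close> r0_pos by simp
  have "{c..R} \<subseteq> {r0<..R}" using \<open>r0 < c\<close> by auto
  then show "continuous_on {c..R} z" using continuous_on_subset[OF z_cont_outer] by blast
qed (use r0_pos in simp)

lemma inner_interface_wronskian_nonpos:
  assumes "zi < 0"
  shows "(1 + \<alpha> * \<kappa>) * u r0 * dzi - zi * b \<le> 0"
proof (rule ccontr)
  define W where "W = wronskian (1 + \<alpha> * \<kappa>) u du z dz"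
  define L where "L = r0 * ((1 + \<alpha> * \<kappa>) * u r0 * dzi - zi * b)"
  assume "\<not> ?thesis"
  then have "0 < L" using r0_pos by (simp add: L_def)
  have W_pos: "0 < W x" if "0 < x" "x < r0" for x
  proof -
    have "L \<le> W x"
    proof (rule DERIV_nonpos_imp_ge_limit_at_left[of 0 r0 W])
      show "(W \<longlongrightarrow> L) (at_left r0)" unfolding W_def L_def by (rule inner_wronskian_tendsto)
      fix y assume y: "0 < y" "y < r0"
      show "(W has_real_derivative u y * z y / y) (at y)" unfolding W_def by (rule inner_wronskian_deriv[OF y])
      show "u y * z y / y \<le> 0"
        using u_pos[of y] z_inner_nonpos_if[of y] assms y r0_less_R
        by (simp add: divide_nonpos_pos mult_nonneg_nonpos)
    qed (use that in auto)
    then show ?thesis using \<open>0 < L\<close> by simp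
  qed
  have ratio_nonneg: "0 \<le> z x / u x" if "0 < x" "x < r0" for x
    using inner_ratio_nonneg_if_wronskian_nonneg[OF z_inner z_cont_inner z_0 _ that] W_pos
    unfolding W_def by (simp add: less_imp_le)
  have "0 \<le> zi / u r0"
    by (rule tendsto_at_left_lowerbound[of 0 r0, OF _ tendsto_divide[OF z_left u_tendsto_left_r0]])
       (use ratio_nonneg r0_pos u_r0_pos in auto)
  then show False using assms u_r0_pos by (simp add: zero_le_divide_iff)
qed

lemma z_jump_eq: "ze - zi = \<alpha> * \<kappa> * (- a)"
  using z_jump flux_continuous by (simp add: algebra_simps)

lemma z_jump_nonneg: "0 \<le> ze - zi"
proof -
  have "0 \<le> \<alpha> * \<kappa> * (- a)" using a_nonpos alpha_nonneg kappa_pos by (intro mult_nonneg_nonneg) auto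
  then show ?thesis using z_jump_eq by simp
qed

lemma outer_interface_wronskian_nonneg_if:
  assumes "ze \<le> 0"
  shows "0 \<le> r0 * (u r0 * dze - ze * b)"
proof (rule tendsto_at_right_lowerbound[OF r0_less_R outer_wronskian_tendsto])
  fix x assume x: "r0 < x" "x < R"
  show "0 \<le> wronskian 1 u du z dz x"
  proof (rule DERIV_nonpos_imp_ge_limit_at_left[OF outer_wronskian_deriv _ outer_wronskian_tendsto_R x])
    fix y assume "r0 < y" "y < R"
    then show "u y * z y / y \<le> 0"
      using u_pos[of y] z_outer_nonpos_if[of y] assms r0_pos
      by (simp add: divide_nonpos_pos mult_nonneg_nonpos)
  qed
qed

lemma z_outer_le_ze:
  assumes "0 \<le> ze" "r0 < x" "x < R"
  shows "z x \<le> ze"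
proof -
  have W_nonpos: "wronskian 1 u du z dz y \<le> 0" if "r0 < y" "y < R" for y
  proof (rule DERIV_nonneg_imp_le_limit_at_left[OF outer_wronskian_deriv _ outer_wronskian_tendsto_R that])
    fix w assume "r0 < w" "w < R"
    then show "0 \<le> u w * z w / w" using u_pos[of w] z_outer_nonneg_if[of w] assms(1) r0_pos by simp
  qed
  have "z x / u x \<le> ze / u r0"
  proof (rule DERIV_nonpos_imp_le_limit_at_right[OF ratio_outer_deriv[OF z_outer]])
    show "((\<lambda>r. z r / u r) \<longlongrightarrow> ze / u r0) (at_right r0)"
      using tendsto_divide[OF z_right u_tendsto_right_r0] u_r0_pos by simp
    show "wronskian 1 u du z dz y / (1 * y * (u y)\<^sup>2) \<le> 0" if "r0 < y" "y < R" for y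
      using W_nonpos[OF that] that r0_pos by (simp add: divide_nonpos_nonneg)
  qed (use assms r0_pos in auto)
  moreover have "0 < u x" "u x \<le> u r0" using u_pos[of x] u_antimonoD[of r0 x] assms r0_pos by auto
  ultimately have "z x \<le> ze / u r0 * u x" by (simp add: divide_le_eq)
  also have "\<dots> \<le> ze / u r0 * u r0"
    using \<open>u x \<le> u r0\<close> assms(1) u_r0_pos by (intro mult_left_mono) auto
  finally show ?thesis using u_r0_pos by simp
qed

lemma outer_interface_wronskian_lower_if:
  assumes "0 \<le> ze"
  shows "- ((R - r0) * u r0 * ze / r0) \<le> r0 * (u r0 * dze - ze * b)"
proof -
  define H where "H x = wronskian 1 u du z dz x - x * u r0 * ze / r0" for x
  have H': "(H has_real_derivative u x * z x / x - u r0 * ze / r0) (at x)" if "r0 < x" "x < R" for x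
  proof -
    have "((\<lambda>x. x * u r0 * ze / r0) has_real_derivative u r0 * ze / r0) (at x)"
      using r0_pos by (auto intro!: derivative_eq_intros)
    from DERIV_diff[OF outer_wronskian_deriv[OF that] this] show ?thesis unfolding H_def by simp
  qed
  have H'_nonpos: "u x * z x / x - u r0 * ze / r0 \<le> 0" if "r0 < x" "x < R" for x
  proof -
    have "u x * z x \<le> u r0 * ze"
      using u_pos[of x] u_antimonoD[of r0 x] z_outer_nonneg_if[of x] z_outer_le_ze[of x] assms that r0_pos
      by (intro mult_mono) auto
    then have "u x * z x / x \<le> u r0 * ze / x" using that r0_pos by (simp add: divide_right_mono)
    also have "\<dots> \<le> u r0 * ze / r0"
      using that r0_pos u_r0_pos assms by (intro divide_left_mono) auto
    finally show ?thesis by simp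
  qed
  define m where "m = (r0 + R) / 2"
  have m: "r0 < m" "m < R" using r0_less_R by (auto simp: m_def)
  have "(H \<longlongrightarrow> 0 - R * u r0 * ze / r0) (at_left R)"
    unfolding H_def by (intro tendsto_intros outer_wronskian_tendsto_R) (use r0_pos in simp)
  then have "0 - R * u r0 * ze / r0 \<le> H m"
    using DERIV_nonpos_imp_ge_limit_at_left[of r0 R H, OF H' H'_nonpos] m by blast
  also have "(H \<longlongrightarrow> r0 * (u r0 * dze - ze * b) - r0 * u r0 * ze / r0) (at_right r0)"
    unfolding H_def by (intro tendsto_intros outer_wronskian_tendsto) (use r0_pos in simp)
  then have "H m \<le> r0 * (u r0 * dze - ze * b) - r0 * u r0 * ze / r0"
    using DERIV_nonpos_imp_le_limit_at_right[of r0 R H, OF H' H'_nonpos] m by blast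
  finally show ?thesis using r0_pos by (simp add: field_simps)
qed

lemma outer_interface_wronskian_lower:
  "- ((R - r0) * u r0 * max ze 0 / r0) \<le> r0 * (u r0 * dze - ze * b)"
  using outer_interface_wronskian_nonneg_if outer_interface_wronskian_lower_if by (cases "0 \<le> ze") auto

lemma zi_nonneg:
  assumes "\<alpha> \<le> alpha_bound \<kappa> r0 R"
  shows "0 \<le> zi"
proof (rule ccontr)
  assume "\<not> 0 \<le> zi"
  define u0 where "u0 = u r0"
  define V where "V = slope_bound \<kappa> r0 R"
  define K where "K = \<kappa> * u0\<^sup>2"
  define P where "P = r0 * V\<^sup>2 + V * (R - r0) / r0"
  have "0 < u0" "0 < K" "0 < V"
    using u_r0_pos kappa_pos slope_bound_pos[OF kappa_pos r0_pos r0_less_R] by (simp_all add: u0_def K_def V_def)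
  have "0 < P" using \<open>0 < V\<close> r0_pos r0_less_R by (simp add: P_def add_pos_nonneg)
  have "\<alpha> * P \<le> r0 / (2 * P) * P"
    using assms \<open>0 < P\<close> unfolding alpha_bound_def V_def P_def by (intro mult_right_mono) auto
  also have "\<dots> = r0 / 2" using \<open>0 < P\<close> by simp
  finally have "\<alpha> * P \<le> r0 / 2" .
  have "- b \<le> V * u0" using neg_b_le by (simp add: V_def u0_def)
  have "ze - zi \<le> \<alpha> * \<kappa> * (V * u0)"
    unfolding z_jump_eq using b_le_a \<open>- b \<le> V * u0\<close> alpha_nonneg kappa_pos
    by (intro mult_left_mono) auto
  note jump_bounds = z_jump_nonneg this
  have dze: "dze = (1 + \<alpha> * \<kappa>) * dzi - \<kappa> * u0" using flux_jump by (simp add: u0_def algebra_simps)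
  have "r0 * K = r0 * ((1 + \<alpha> * \<kappa>) * u0 * dzi - zi * b) - r0 * (u0 * dze - ze * b)
      + r0 * ((ze - zi) * (- b))"
    by (simp add: dze K_def power2_eq_square algebra_simps)
  also have "\<dots> \<le> (R - r0) * u0 * max ze 0 / r0 + r0 * ((ze - zi) * (- b))"
  proof -
    have "r0 * ((1 + \<alpha> * \<kappa>) * u0 * dzi - zi * b) \<le> 0"
      using mult_nonneg_nonpos[OF less_imp_le[OF r0_pos] inner_interface_wronskian_nonpos] \<open>\<not> 0 \<le> zi\<close>
      by (simp add: u0_def)
    then show ?thesis using outer_interface_wronskian_lower unfolding u0_def by linarith
  qed
  also have "\<dots> \<le> (R - r0) * u0 * (\<alpha> * \<kappa> * (V * u0)) / r0 + r0 * ((\<alpha> * \<kappa> * (V * u0)) * (V * u0))"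
  proof (intro add_mono divide_right_mono mult_left_mono mult_mono)
    show "max ze 0 \<le> \<alpha> * \<kappa> * (V * u0)" using jump_bounds \<open>\<not> 0 \<le> zi\<close> by simp
  qed (use jump_bounds \<open>- b \<le> V * u0\<close> b_nonpos r0_pos r0_less_R \<open>0 < u0\<close> in auto)
  also have "\<dots> = \<alpha> * P * K"
    using r0_pos by (simp add: P_def K_def field_simps power2_eq_square)
  also have "\<dots> \<le> r0 / 2 * K"
    using \<open>\<alpha> * P \<le> r0 / 2\<close> \<open>0 < K\<close> by (intro mult_right_mono) auto
  finally show False using \<open>0 < K\<close> r0_pos by simp
qed

lemma z_nonneg:
  assumes "\<alpha> \<le> alpha_bound \<kappa> r0 R" "r \<in> {0<..<R} - {r0}"
  shows "0 \<le> z r"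
proof -
  have "0 \<le> zi" using zi_nonneg[OF assms(1)] .
  moreover have "zi \<le> ze" using z_jump_nonneg by simp
  ultimately show ?thesis
    using z_inner_nonneg_if z_outer_nonneg_if assms(2) by (cases "r < r0") auto
qed

end

lemma principal_eigenpair_imp_nonneg_eigenprofile:
  assumes "0 < \<kappa>" "0 < r0" "r0 < R" "0 \<le> \<alpha>" "principal_eigenpair \<kappa> r0 \<alpha> R lam u"
  obtains du a b where "nonneg_eigenprofile \<kappa> r0 R \<alpha> lam u du a b"
proof -
  obtain du a b where "solves_radial_ode \<kappa> r0 \<alpha> R lam 0 u du"
      "(du \<longlongrightarrow> a) (at_left r0)" "(du \<longlongrightarrow> b) (at_right r0)" "b - (1 + \<alpha> * \<kappa>) * a = 0"
    using assms(5) unfolding principal_eigenpair_def radial_eigenfunction_def by blast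
  then have "nonneg_eigenprofile \<kappa> r0 R \<alpha> lam u du a b"
    using assms unfolding principal_eigenpair_def radial_eigenfunction_def
    by unfold_locales auto
  then show ?thesis by (rule that)
qed

lemma (in nonneg_eigenprofile) z_solution_if_z_problem:
  assumes "z_problem \<kappa> r0 \<alpha> R lam u 1 z"
  obtains dz zi ze dzi dze where "z_solution \<kappa> r0 R \<alpha> lam u du a b z dz zi ze dzi dze"
proof -
  obtain dz du' zi ze dzi dze dui due where z:
    "continuous_on {0..<r0} z" "continuous_on {r0<..R} z" "solves_radial_ode \<kappa> r0 \<alpha> R lam 1 z dz"
    "\<forall>r \<in> {0<..<r0} \<union> {r0<..<R}. (u has_real_derivative du' r) (at r)"
    "(z \<longlongrightarrow> zi) (at_left r0)" "(z \<longlongrightarrow> ze) (at_right r0)"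
    "(dz \<longlongrightarrow> dzi) (at_left r0)" "(dz \<longlongrightarrow> dze) (at_right r0)"
    "(du' \<longlongrightarrow> dui) (at_left r0)" "(du' \<longlongrightarrow> due) (at_right r0)"
    "1 * dze - (1 + \<alpha> * \<kappa>) * dzi = - \<kappa> * u r0" "ze - zi = - (due - dui)" "z 0 = 0" "z R = 0"
    using assms unfolding z_problem_def by blast
  have "du' x = du x" if "0 < x" "x < R" "x \<noteq> r0" for x
    using DERIV_unique[OF _ du_deriv[OF that]] z(4) that by (auto simp: linorder_neq_iff)
  then have "\<forall>\<^sub>F x in at_left r0. du' x = du x" "\<forall>\<^sub>F x in at_right r0. du' x = du x"
    using r0_pos r0_less_R by (auto simp: eventually_at_left_field eventually_at_right_field)
  then have "dui = a" "due = b"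
    using tendsto_unique[OF _ tendsto_cong[THEN iffD1, OF _ z(9)] du_left]
      tendsto_unique[OF _ tendsto_cong[THEN iffD1, OF _ z(10)] du_right] by auto
  then have "z_solution \<kappa> r0 R \<alpha> lam u du a b z dz zi ze dzi dze"
    using z by (intro z_solution.intro nonneg_eigenprofile_axioms z_solution_axioms.intro) auto
  then show ?thesis by (rule that)
qed

theorem lemma6p5:
  fixes R \<kappa> m0 r0 :: real
  assumes "0 < m0" and "m0 < \<kappa>" and "0 < r0" and "r0 < R"
    and "\<kappa> * (pi * r0\<^sup>2) = m0 * (pi * R\<^sup>2)"
  shows "\<exists>\<alpha>bar > 0. \<forall>\<alpha> \<in> {0..\<alpha>bar}. \<forall>lam u z.
           principal_eigenpair \<kappa> r0 \<alpha> R lam u \<longrightarrow> z_problem \<kappa> r0 \<alpha> R lam u 1 z \<longrightarrow>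
           (\<forall>r \<in> {0<..<R} - {r0}. 0 \<le> z r)"
proof (intro exI[of _ "alpha_bound \<kappa> r0 R"] conjI ballI allI impI)
  have "0 < \<kappa>" using assms(1,2) by simp
  then show "0 < alpha_bound \<kappa> r0 R" using alpha_bound_pos assms(3,4) by blast
  fix \<alpha> lam u z r
  assume \<alpha>: "\<alpha> \<in> {0..alpha_bound \<kappa> r0 R}" and eig: "principal_eigenpair \<kappa> r0 \<alpha> R lam u"
    and zp: "z_problem \<kappa> r0 \<alpha> R lam u 1 z" and r: "r \<in> {0<..<R} - {r0}"
  obtain du a b where "nonneg_eigenprofile \<kappa> r0 R \<alpha> lam u du a b"
    using principal_eigenpair_imp_nonneg_eigenprofile[OF \<open>0 < \<kappa>\<close> assms(3,4) _ eig] \<alpha> by auto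
  then interpret nonneg_eigenprofile \<kappa> r0 R \<alpha> lam u du a b .
  obtain dz zi ze dzi dze where "z_solution \<kappa> r0 R \<alpha> lam u du a b z dz zi ze dzi dze"
    using z_solution_if_z_problem[OF zp] .
  then interpret z_solution \<kappa> r0 R \<alpha> lam u du a b z dz zi ze dzi dze .
  show "0 \<le> z r" using z_nonneg \<alpha> r by auto
qed

end
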